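(* Let $A\in M_{n}(\mathbb{R})$ be a non-singular $n\times n$ matrix that is properly arranged. Then $A$ is diagonally eliminable.
   Context: Gauss-Jordan procedure: for $A\in M_{m,n}(\mathbb{R})$ set $A^{(0)}=A$. For $k\geq 0$, if $A^{(2k)}=[a^{(2k)}_{ij}]$ is defined and $a^{(2k)}_{k+1,k+1}\neq 0$, let $\mathcal{G}_{2k+1}$ be the $m\times m$ diagonal matrix with all diagonal entries $1$ except the $(k+1,k+1)$ entry, which is $1/a^{(2k)}_{k+1,k+1}$, and set $A^{(2k+1)}=\mathcal{G}_{2k+1}A^{(2k)}=[a^{(2k+1)}_{ij}]$; then let $\mathcal{G}_{2k+2}=[g_{ij}]_{m\times m}$ with $g_{ii}=1$, $g_{i,k+1}=-a^{(2k+1)}_{i,k+1}$ for $i\neq k+1$, and all other entries $0$, and set $A^{(2k+2)}=\mathcal{G}_{2k+2}A^{(2k+1)}$. A matrix $A\in M_{m,n}(\mathbb{R})$ of rank $r\geq 1$ is diagonally eliminable up to $r$ if for each $k=1,\dots,r$ the matrix $A^{(2k-2)}$ is defined and $a^{(2k-2)}_{kk}\neq 0$; it is diagonally eliminable if moreover $r=m\leq n$. Minors: $m^{i_1\dots i_p}_{j_1\dots j_p}$ (increasing indices) is the determinant of the submatrix of $A$ with rows $i_1,\dots,i_p$ and columns $j_1,\dots,j_p$; $m_k=m^{1\dots k}_{1\dots k}$. $A$ (of rank $\geq 1$) is properly arranged if $|a_{ij}|\leq|a_{11}|$ for all $i,j$, and for every integer $k$ with $1\leq k<\min\{m,n\}$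 one has $|m^{1\dots k\,i}_{1\dots k\,j}|\leq|m_{k+1}|$ for all $k+1\leq i\leq m$, $k+1\leq j\leq n$. *)

theory Defs
  imports "Jordan_Normal_Form.DL_Rank_Submatrix"
begin

(* Matrices are Jordan_Normal_Form matrices; indices are 0-based, so the
   paper's row/column index k+1 corresponds to index k here. *)

definition mat_rank :: "real mat \<Rightarrow> nat" where
  "mat_rank A = vec_space.rank (dim_row A) A"

definition minor :: "real mat \<Rightarrow> nat set \<Rightarrow> nat set \<Rightarrow> real" where
  "minor A I J = det (submatrix A I J)"

definition lead_minor :: "real mat \<Rightarrow> nat \<Rightarrow> real" where
  "lead_minor A k = minor A {0..<k} {0..<k}"

definition gj_G_odd :: "real mat \<Rightarrow> nat \<Rightarrow> real mat" where
  "gj_G_odd B k = mat (dim_row B) (dim_row B)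
     (\<lambda>(i,j). if i = j then (if i = k then 1 / B $$ (k,k) else 1) else 0)"

definition gj_G_even :: "real mat \<Rightarrow> nat \<Rightarrow> real mat" where
  "gj_G_even C k = mat (dim_row C) (dim_row C)
     (\<lambda>(i,j). if i = j then 1 else if j = k then - (C $$ (i,k)) else 0)"

(* gj_even A k = A^(2k) if defined, None otherwise *)
fun gj_even :: "real mat \<Rightarrow> nat \<Rightarrow> real mat option" where
  "gj_even A 0 = Some A"
| "gj_even A (Suc k) =
     (case gj_even A k of
        None \<Rightarrow> None
      | Some B \<Rightarrow>
          (if k < dim_row B \<and> k < dim_col B \<and> B $$ (k,k) \<noteq> 0
           then (let C = gj_G_odd B k * B in Some (gj_G_even C k * C))
           else None))"

(* diagonally eliminable up to r: for k = 1..r (paper), i.e. k = 0..r-1 here,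
   A^(2k) is defined and its (k,k) entry is nonzero *)
definition diag_elim_up_to :: "real mat \<Rightarrow> nat \<Rightarrow> bool" where
  "diag_elim_up_to A r \<longleftrightarrow>
     (\<forall>k < r. \<exists>B. gj_even A k = Some B \<and> k < dim_row B \<and> k < dim_col B \<and> B $$ (k,k) \<noteq> 0)"

definition diag_eliminable :: "real mat \<Rightarrow> bool" where
  "diag_eliminable A \<longleftrightarrow>
     mat_rank A \<ge> 1 \<and> diag_elim_up_to A (mat_rank A) \<and>
     mat_rank A = dim_row A \<and> dim_row A \<le> dim_col A"

definition properly_arranged :: "real mat \<Rightarrow> bool" where
  "properly_arranged A \<longleftrightarrow>
     mat_rank A \<ge> 1 \<and>
     (\<forall>i < dim_row A. \<forall>j < dim_col A. \<bar>A $$ (i,j)\<bar> \<le> \<bar>A $$ (0,0)\<bar>) \<and>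
     (\<forall>k. 1 \<le> k \<and> k < min (dim_row A) (dim_col A) \<longrightarrow>
        (\<forall>i j. k \<le> i \<and> i < dim_row A \<and> k \<le> j \<and> j < dim_col A \<longrightarrow>
           \<bar>minor A ({0..<k} \<union> {i}) ({0..<k} \<union> {j})\<bar> \<le> \<bar>lead_minor A (Suc k)\<bar>))"

end

theory Submission
  imports Defs
begin

(* Let B_k = A^(2k). By induction on k, the first k columns of B_k are those of the identity
   and every minor of A whose row set contains rows 0..k-1 equals D_k times the same minor of
   B_k, where D_k is the (nonzero) product of the pivots so far: pivoting on (k,k) divides row k
   by the pivot and adds multiples of row k to the other rows, which changes such minors only
   by the factor 1/pivot. A minor of B_k bordering rows and columns 0..k-1 by row i and column
   j is just the entry (i,j). Hence a vanishing pivot of B_k would give m_(k+1) = 0, so by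
   proper arrangement every bordered minor in row k, i.e. the whole row k of B_k, vanishes,
   and then det A = D_k * det B_k = 0. *)

lemma submatrix_row_pick:
  assumes "s < dim_row (submatrix A I J)"
  shows "pick I s \<in> I" and "pick I s < dim_row A" and "card {a \<in> I. a < pick I s} = s"
proof -
  have s: "s < card {i. i < dim_row A \<and> i \<in> I}"
    using assms by (simp add: dim_submatrix)
  have "s < card I \<or> infinite I"
    using s card_mono[of I "{i. i < dim_row A \<and> i \<in> I}"] by fastforce
  then show "pick I s \<in> I" and "card {a \<in> I. a < pick I s} = s"
    by (simp_all add: pick_in_set card_pick)
  show "pick I s < dim_row A"
    using pick_le[OF s] .
qed

lemma submatrix_row_card_less:
  assumes "r \<in> I" and "r < dim_row A"
  shows "card {a \<in> I. a < r} < dim_row (submatrix A I J)"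
proof -
  have "{a \<in> I. a < r} \<subset> {i. i < dim_row A \<and> i \<in> I}"
    using assms by auto
  then show ?thesis
    by (simp add: dim_submatrix psubset_card_mono)
qed

lemma submatrix_row_pick_eq_iff:
  assumes "s < dim_row (submatrix A I J)" and "r \<in> I"
  shows "pick I s = r \<longleftrightarrow> s = card {a \<in> I. a < r}"
  using submatrix_row_pick(3)[OF assms(1)] pick_card_in_set[OF assms(2)] by auto

lemma submatrix_multrow:
  assumes "r \<in> I" and "r < dim_row A"
  shows "submatrix (multrow r a A) I J = multrow (card {x \<in> I. x < r}) a (submatrix A I J)"
proof (rule eq_matI)
  fix s c
  assume "s < dim_row (multrow (card {x \<in> I. x < r}) a (submatrix A I J))"
    and "c < dim_col (multrow (card {x \<in> I. x < r}) a (submatrix A I J))"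
  then have s: "s < dim_row (submatrix A I J)" and c: "c < dim_col (submatrix A I J)"
    by simp_all
  then show "submatrix (multrow r a A) I J $$ (s, c)
      = multrow (card {x \<in> I. x < r}) a (submatrix A I J) $$ (s, c)"
    using submatrix_row_pick[OF s] pick_le submatrix_row_pick_eq_iff[OF s assms(1)]
    by (auto simp: submatrix_index dim_submatrix)
qed (simp_all add: dim_submatrix)

lemma minor_multrow:
  assumes "r \<in> I" and "r < dim_row A"
  shows "minor (multrow r a A) I J = a * minor A I J"
proof (cases "dim_row (submatrix A I J) = dim_col (submatrix A I J)")
  case True
  then have "submatrix A I J \<in> carrier_mat (dim_row (submatrix A I J)) (dim_row (submatrix A I J))"
    by auto
  then show ?thesis
    unfolding minor_def submatrix_multrow[OF assms]
    using det_multrow submatrix_row_card_less[OF assms] by blast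
next
  case False
  then show ?thesis
    unfolding minor_def submatrix_multrow[OF assms] by (simp add: det_def dim_submatrix)
qed

definition addrows :: "(nat \<Rightarrow> 'a::semiring_1) \<Rightarrow> nat \<Rightarrow> 'a mat \<Rightarrow> 'a mat" where
  "addrows f l A = mat (dim_row A) (dim_col A)
     (\<lambda>(i,j). if i = l then A $$ (i,j) else A $$ (i,j) + f i * A $$ (l,j))"

lemma dim_addrows [simp]:
  "dim_row (addrows f l A) = dim_row A" "dim_col (addrows f l A) = dim_col A"
  by (simp_all add: addrows_def)

lemma index_addrows [simp]:
  "i < dim_row A \<Longrightarrow> j < dim_col A \<Longrightarrow>
   addrows f l A $$ (i,j) = (if i = l then A $$ (i,j) else A $$ (i,j) + f i * A $$ (l,j))"
  by (simp add: addrows_def)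

lemma det_addrows:
  assumes A: "A \<in> carrier_mat n n" and l: "l < n"
  shows "det (addrows f l A) = det A"
proof -
  let ?M = "\<lambda>R. mat n n (\<lambda>(i,j). if i \<in> R then A $$ (i,j) + f i * A $$ (l,j) else A $$ (i,j))"
  have det_M: "det (?M R) = det A" if "finite R" "l \<notin> R" for R
    using that
  proof (induction R rule: finite_induct)
    case empty
    have "?M {} = A"
      using A by (intro eq_matI) auto
    then show ?case by simp
  next
    case (insert r R)
    have "?M (insert r R) = addrow (f r) r l (?M R)"
      using A insert l by (intro eq_matI) (auto simp: algebra_simps)
    then show ?case
      using det_addrow[OF l, of r "?M R"] insert by simp
  qed
  have "addrows f l A = ?M ({0..<n} - {l})"
    using A by (intro eq_matI) auto
  then show ?thesis
    using det_M[of "{0..<n} - {l}"] by simp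
qed

lemma submatrix_addrows:
  assumes "l \<in> I" and "l < dim_row A"
  shows "submatrix (addrows f l A) I J
    = addrows (f \<circ> pick I) (card {x \<in> I. x < l}) (submatrix A I J)"
proof (rule eq_matI)
  fix s c
  assume "s < dim_row (addrows (f \<circ> pick I) (card {x \<in> I. x < l}) (submatrix A I J))"
    and "c < dim_col (addrows (f \<circ> pick I) (card {x \<in> I. x < l}) (submatrix A I J))"
  then have s: "s < dim_row (submatrix A I J)" and c: "c < dim_col (submatrix A I J)"
    by simp_all
  have l': "card {x \<in> I. x < l} < dim_row (submatrix A I J)"
    using submatrix_row_card_less[OF assms] .
  show "submatrix (addrows f l A) I J $$ (s, c)
      = addrows (f \<circ> pick I) (card {x \<in> I. x < l}) (submatrix A I J) $$ (s, c)"
    using submatrix_row_pick[OF s] pick_le submatrix_row_pick_eq_iff[OF s assms(1)]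
      pick_card_in_set[OF assms(1)] s c l'
    by (auto simp: submatrix_index dim_submatrix)
qed (simp_all add: dim_submatrix)

lemma minor_addrows:
  assumes "l \<in> I" and "l < dim_row A"
  shows "minor (addrows f l A) I J = minor A I J"
proof (cases "dim_row (submatrix A I J) = dim_col (submatrix A I J)")
  case True
  then have "submatrix A I J \<in> carrier_mat (dim_row (submatrix A I J)) (dim_row (submatrix A I J))"
    by auto
  then show ?thesis
    unfolding minor_def submatrix_addrows[OF assms]
    using det_addrows submatrix_row_card_less[OF assms] by blast
next
  case False
  then show ?thesis
    unfolding minor_def submatrix_addrows[OF assms] by (simp add: det_def dim_submatrix)
qed

definition gj_pivot :: "real mat \<Rightarrow> nat \<Rightarrow> real mat" where
  "gj_pivot B k = (let C = multrow k (1 / B $$ (k,k)) B in addrows (\<lambda>i. - C $$ (i,k)) k C)"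

lemma gj_G_odd_mult: "gj_G_odd B k * B = multrow k (1 / B $$ (k,k)) B"
proof (rule eq_matI)
  fix i j
  assume i: "i < dim_row (multrow k (1 / B $$ (k,k)) B)"
    and j: "j < dim_col (multrow k (1 / B $$ (k,k)) B)"
  have "(gj_G_odd B k * B) $$ (i,j)
      = (\<Sum>l<dim_row B. (if i = l then (if i = k then 1 / B $$ (k,k) else 1) else 0) * B $$ (l,j))"
    using i j by (simp add: gj_G_odd_def scalar_prod_def atLeast0LessThan)
  then show "(gj_G_odd B k * B) $$ (i,j) = multrow k (1 / B $$ (k,k)) B $$ (i,j)"
    using i j by (simp add: if_distrib[of "\<lambda>x. x * _"] cong: if_cong)
qed (simp_all add: gj_G_odd_def)

lemma gj_G_even_mult:
  assumes k: "k < dim_row C"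
  shows "gj_G_even C k * C = addrows (\<lambda>i. - C $$ (i,k)) k C"
proof (rule eq_matI)
  fix i j
  assume i: "i < dim_row (addrows (\<lambda>i. - C $$ (i,k)) k C)"
    and j: "j < dim_col (addrows (\<lambda>i. - C $$ (i,k)) k C)"
  have "(gj_G_even C k * C) $$ (i,j) = (\<Sum>l<dim_row C. gj_G_even C k $$ (i,l) * C $$ (l,j))"
    using i j by (simp add: gj_G_even_def scalar_prod_def atLeast0LessThan)
  also have "\<dots> = (\<Sum>l<dim_row C. (if i = l then C $$ (l,j) else 0)
                                   + (if k = l \<and> i \<noteq> k then - C $$ (i,k) * C $$ (l,j) else 0))"
    using i by (intro sum.cong) (auto simp: gj_G_even_def)
  finally show "(gj_G_even C k * C) $$ (i,j) = addrows (\<lambda>i. - C $$ (i,k)) k C $$ (i,j)"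
    using i j k by (simp add: sum.distrib)
qed (simp_all add: gj_G_even_def)

lemma gj_G_mult_pivot:
  assumes "k < dim_row B"
  shows "gj_G_even (gj_G_odd B k * B) k * (gj_G_odd B k * B) = gj_pivot B k"
proof -
  have "k < dim_row (multrow k (1 / B $$ (k,k)) B)"
    using assms by simp
  from gj_G_even_mult[OF this] show ?thesis
    unfolding gj_G_odd_mult gj_pivot_def Let_def .
qed

lemma gj_even_Suc:
  assumes "gj_even A k = Some B"
  shows "gj_even A (Suc k) =
    (if k < dim_row B \<and> k < dim_col B \<and> B $$ (k,k) \<noteq> 0 then Some (gj_pivot B k) else None)"
  using assms by (simp del: gj_even.simps add: gj_even.simps(2) gj_G_mult_pivot)

lemma dim_gj_pivot [simp]:
  "dim_row (gj_pivot B k) = dim_row B" "dim_col (gj_pivot B k) = dim_col B"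
  by (simp_all add: gj_pivot_def Let_def)

lemma gj_pivot_carrier: "B \<in> carrier_mat m n \<Longrightarrow> gj_pivot B k \<in> carrier_mat m n"
  unfolding carrier_mat_def by simp

lemma gj_even_carrier:
  "A \<in> carrier_mat m n \<Longrightarrow> gj_even A k = Some B \<Longrightarrow> B \<in> carrier_mat m n"
proof (induction k arbitrary: B)
  case (Suc k)
  obtain B0 where B0: "gj_even A k = Some B0"
    using Suc.prems(2) by (cases "gj_even A k") auto
  have "B = gj_pivot B0 k"
    using Suc.prems(2) unfolding gj_even_Suc[OF B0] by (metis option.distinct(1) option.inject)
  then show ?case
    using gj_pivot_carrier Suc.IH[OF Suc.prems(1) B0] by simp
qed simp

lemma index_gj_pivot:
  assumes "i < dim_row B" and "j < dim_col B" and "k < dim_row B" and "k < dim_col B"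
  shows "gj_pivot B k $$ (i,j) =
    (if i = k then B $$ (k,j) / B $$ (k,k) else B $$ (i,j) - B $$ (i,k) * B $$ (k,j) / B $$ (k,k))"
  using assms by (simp add: gj_pivot_def Let_def)

lemma minor_gj_pivot:
  assumes "k \<in> I" and "k < dim_row B"
  shows "minor (gj_pivot B k) I J = minor B I J / B $$ (k,k)"
  using assms by (simp add: gj_pivot_def Let_def minor_addrows minor_multrow)

definition identity_cols :: "'a::zero_neq_one mat \<Rightarrow> nat \<Rightarrow> bool" where
  "identity_cols B k \<longleftrightarrow> (\<forall>i < dim_row B. \<forall>j < k. B $$ (i,j) = (if i = j then 1 else 0))"

lemma identity_cols_gj_pivot:
  assumes cols: "identity_cols B k" and "k < dim_row B" and "k < dim_col B" and "B $$ (k,k) \<noteq> 0"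
  shows "identity_cols (gj_pivot B k) (Suc k)"
  unfolding identity_cols_def
proof (intro allI impI)
  fix i j assume i: "i < dim_row (gj_pivot B k)" and j: "j < Suc k"
  then show "gj_pivot B k $$ (i,j) = (if i = j then 1 else 0)"
    using assms cols[unfolded identity_cols_def, rule_format, of _ j]
    by (cases "j = k") (auto simp: index_gj_pivot)
qed

lemma pick_initial_segment:
  assumes "{0..<k} \<subseteq> I" and "s < k"
  shows "pick I s = s"
  using assms(2)
proof (induction s)
  case 0
  then show ?case using assms(1) by (auto intro!: Least_equality)
next
  case (Suc s)
  then show ?case using assms(1) by (auto intro!: Least_equality)
qed

lemma pick_bordered_last:
  assumes "k \<le> i"
  shows "pick ({0..<k} \<union> {i}) k = i"
proof (cases k)
  case 0
  then show ?thesis by (auto intro!: Least_equality)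
next
  case (Suc k')
  have "pick ({0..<k} \<union> {i}) k' = k'"
    using pick_initial_segment[of k "{0..<k} \<union> {i}" k'] Suc by auto
  then show ?thesis using Suc assms by (auto intro!: Least_equality)
qed

lemma pick_bordered:
  assumes "k \<le> i" and "s \<le> k"
  shows "pick ({0..<k} \<union> {i}) s = (if s < k then s else i)"
  using assms pick_initial_segment[of k _ s] pick_bordered_last[of k i] by (cases "s < k") auto

lemma card_bordered:
  assumes "k \<le> i" and "i < m"
  shows "card {x. x < m \<and> x \<in> {0..<k} \<union> {i}} = Suc k"
proof -
  have "{x. x < m \<and> x \<in> {0..<k} \<union> {i}} = insert i {0..<k}"
    using assms by auto
  then show ?thesis
    using assms(1) by simp
qed

lemma minor_bordered_identity_cols:
  assumes cols: "identity_cols B k"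
    and i: "k \<le> i" "i < dim_row B" and j: "k \<le> j" "j < dim_col B"
  shows "minor B ({0..<k} \<union> {i}) ({0..<k} \<union> {j}) = B $$ (i,j)"
proof -
  let ?I = "{0..<k} \<union> {i}" and ?J = "{0..<k} \<union> {j}"
  define S where "S = submatrix B ?I ?J"
  have S: "S \<in> carrier_mat (Suc k) (Suc k)"
    unfolding S_def carrier_mat_def mem_Collect_eq dim_submatrix
      card_bordered[OF i] card_bordered[OF j]
    by simp
  have S_index: "S $$ (s,c) = B $$ (if s < k then s else i, if c < k then c else j)"
    if "s < Suc k" "c < Suc k" for s c
  proof -
    have "S $$ (s,c) = B $$ (pick ?I s, pick ?J c)"
      unfolding S_def using that
      by (intro submatrix_index) (simp_all only: card_bordered[OF i] card_bordered[OF j])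
    then show ?thesis
      using that i j pick_bordered[of k i s] pick_bordered[of k j c] by simp
  qed
  have "upper_triangular S"
    unfolding upper_triangular_def
    using S S_index cols i by (auto simp: identity_cols_def)
  then have "det S = (\<Prod>s<Suc k. S $$ (s,s))"
    using S by (simp add: det_upper_triangular[OF _ S] prod_list_diag_prod atLeast0LessThan)
  also have "\<dots> = B $$ (i,j)"
    using S_index cols i by (simp add: identity_cols_def)
  finally show ?thesis
    by (simp add: minor_def S_def)
qed

lemma lead_minor_Suc: "lead_minor A (Suc k) = minor A ({0..<k} \<union> {k}) ({0..<k} \<union> {k})"
  by (simp add: lead_minor_def atLeastLessThanSuc Un_commute)

lemma properly_arranged_bordered_minor_le:
  assumes pa: "properly_arranged A" and k: "k < min (dim_row A) (dim_col A)"
    and i: "k \<le> i" "i < dim_row A" and j: "k \<le> j" "j < dim_col A"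
  shows "\<bar>minor A ({0..<k} \<union> {i}) ({0..<k} \<union> {j})\<bar> \<le> \<bar>lead_minor A (Suc k)\<bar>"
proof (cases "k = 0")
  case True
  have "identity_cols A 0"
    by (simp add: identity_cols_def)
  then have "minor A {i} {j} = A $$ (i,j)" and "lead_minor A 1 = A $$ (0,0)"
    using minor_bordered_identity_cols[of A 0] i j k True
    by (simp_all add: lead_minor_Suc[of _ 0, simplified])
  then show ?thesis
    using pa i j True unfolding properly_arranged_def by simp
next
  case False
  then show ?thesis
    using pa k i j unfolding properly_arranged_def by simp
qed

definition gj_invariant :: "real mat \<Rightarrow> nat \<Rightarrow> real mat \<Rightarrow> bool" where
  "gj_invariant A k B \<longleftrightarrow> gj_even A k = Some B \<and> identity_cols B k \<and>
     (\<exists>D. D \<noteq> 0 \<and> (\<forall>I J. {0..<k} \<subseteq> I \<longrightarrow> minor A I J = D * minor B I J))"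

lemma gj_invariant_0: "gj_invariant A 0 A"
  unfolding gj_invariant_def identity_cols_def by (auto intro: exI[of _ 1])

lemma gj_invariant_Suc:
  assumes inv: "gj_invariant A k B"
    and k: "k < dim_row B" "k < dim_col B" and p: "B $$ (k,k) \<noteq> 0"
  shows "gj_invariant A (Suc k) (gj_pivot B k)"
proof -
  obtain D where B: "gj_even A k = Some B" and cols: "identity_cols B k" and D: "D \<noteq> 0"
    and minors: "\<And>I J. {0..<k} \<subseteq> I \<Longrightarrow> minor A I J = D * minor B I J"
    using inv unfolding gj_invariant_def by blast
  have "gj_even A (Suc k) = Some (gj_pivot B k)"
    using k p unfolding gj_even_Suc[OF B] by simp
  moreover have "identity_cols (gj_pivot B k) (Suc k)"
    using identity_cols_gj_pivot[OF cols k p] .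
  moreover have "minor A I J = (D * B $$ (k,k)) * minor (gj_pivot B k) I J"
    if "{0..<Suc k} \<subseteq> I" for I J
  proof -
    have "{0..<k} \<subseteq> I" and "k \<in> I"
      using that by auto
    then show ?thesis
      using minors[of I J] minor_gj_pivot[of k I B J] k p by simp
  qed
  ultimately show ?thesis
    using D p unfolding gj_invariant_def by (metis mult_eq_0_iff)
qed

lemma submatrix_UNIV: "submatrix A UNIV UNIV = A"
  by (intro eq_matI) (auto simp: dim_submatrix submatrix_index pick_UNIV)

lemma gj_invariant_pivot_nonzero:
  assumes A: "A \<in> carrier_mat n n" and det: "det A \<noteq> 0" and pa: "properly_arranged A"
    and inv: "gj_invariant A k B" and k: "k < n"
  shows "B $$ (k,k) \<noteq> 0"
proof
  assume zero: "B $$ (k,k) = 0"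
  obtain D where B_some: "gj_even A k = Some B" and cols: "identity_cols B k" and D: "D \<noteq> 0"
    and minors: "\<And>I J. {0..<k} \<subseteq> I \<Longrightarrow> minor A I J = D * minor B I J"
    using inv unfolding gj_invariant_def by blast
  have B: "B \<in> carrier_mat n n"
    using gj_even_carrier[OF A B_some] .
  have bordered: "minor A ({0..<k} \<union> {k}) ({0..<k} \<union> {j}) = D * B $$ (k,j)"
    if "k \<le> j" "j < n" for j
  proof -
    have "{0..<k} \<subseteq> {0..<k} \<union> {k}"
      by blast
    then show ?thesis
      using minors minor_bordered_identity_cols[OF cols, of k j] B k that by simp
  qed
  have lead_zero: "lead_minor A (Suc k) = 0"
    using bordered[of k] zero k by (simp add: lead_minor_Suc)
  have row_zero: "B $$ (k,j) = 0" if j: "j < n" for j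
  proof (cases "k \<le> j")
    case True
    then have "\<bar>D * B $$ (k,j)\<bar> \<le> 0"
      using properly_arranged_bordered_minor_le[OF pa, of k k j] bordered[OF True j] lead_zero A k j
      by simp
    then show ?thesis
      using D by simp
  next
    case False
    then show ?thesis
      using cols B k j unfolding identity_cols_def by auto
  qed
  have "multrow k 0 B = B"
    using B row_zero by (intro eq_matI) auto
  then have "det B = 0"
    using det_multrow[OF k B, of 0] by simp
  moreover have "det A = D * det B"
    using minors[of UNIV UNIV] by (simp add: minor_def submatrix_UNIV)
  ultimately show False
    using det by simp
qed

lemma gj_invariant_exists:
  assumes A: "A \<in> carrier_mat n n" and "det A \<noteq> 0" and "properly_arranged A"
  shows "k \<le> n \<Longrightarrow> \<exists>B. gj_invariant A k B"
proof (induction k)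
  case 0
  show ?case
    using gj_invariant_0 by blast
next
  case (Suc k)
  then obtain B where inv: "gj_invariant A k B" and k: "k < n"
    by auto
  have "B \<in> carrier_mat n n"
    using inv gj_even_carrier[OF A] unfolding gj_invariant_def by blast
  then show ?case
    using gj_invariant_Suc[OF inv] gj_invariant_pivot_nonzero[OF assms inv k] k by auto
qed

theorem corollary2p12:
  fixes A :: "real mat" and n :: nat
  assumes "A \<in> carrier_mat n n"
    and "det A \<noteq> 0"
    and "properly_arranged A"
  shows "diag_eliminable A"
proof -
  have rank: "mat_rank A = n"
    using vec_space.det_rank_iff[OF assms(1)] assms(1,2) unfolding mat_rank_def by simp
  have "diag_elim_up_to A n"
    unfolding diag_elim_up_to_def
  proof (intro allI impI)
    fix k assume k: "k < n"
    then obtain B where inv: "gj_invariant A k B"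
      using gj_invariant_exists[OF assms] by fastforce
    then have "gj_even A k = Some B" and "B \<in> carrier_mat n n"
      using gj_even_carrier[OF assms(1)] unfolding gj_invariant_def by blast+
    then show "\<exists>B. gj_even A k = Some B \<and> k < dim_row B \<and> k < dim_col B \<and> B $$ (k,k) \<noteq> 0"
      using gj_invariant_pivot_nonzero[OF assms inv k] k by auto
  qed
  then show ?thesis
    using rank assms unfolding diag_eliminable_def properly_arranged_def by auto
qed

end
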